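(* Let $n,m,N$ be positive integers. Let $\mathcal{Q}_f\in\mathbb{R}^{n\times n}$ be symmetric positive definite and $\boldsymbol{b}\in\mathbb{R}^n$, and for each $i=1,\dots,N$ let $t_i>0$, let $\mathcal{R}_i\in\mathbb{R}^{m\times m}$ be symmetric positive definite, let $B_i\in\mathbb{R}^{n\times m}$ and $\boldsymbol{a}_i\in\mathbb{R}^m$. Set $T_0=0$ and $T_i=\sum_{j=1}^i t_j$. Let $P\colon[0,T_N]\to\mathbb{R}^{n\times n}$ and $q\colon[0,T_N]\to\mathbb{R}^n$ be the (continuous, piecewise smooth) solution of the piecewise Riccati ODE system $$\dot P(s) = -P(s)B_i\mathcal{R}_i^{-1}B_i^TP(s),\qquad \dot q(s) = -P(s)B_i\mathcal{R}_i^{-1}\big(B_i^Tq(s)-\boldsymbol{a}_i\big),\qquad s\in[T_{i-1},T_i),\ i=1,\dots,N,$$ with $P(0)=\mathcal{Q}_f$ and $q(0)=\boldsymbol{b}$, whose values at time $T_N$ are $$P(T_N)=\Big(\mathcal{Q}_f^{-1}+\sum_{i=1}^N t_iB_i\mathcal{R}_i^{-1}B_i^T\Big)^{-1},\qquad q(T_N)=P(T_N)\Big(\mathcal{Q}_f^{-1}\boldsymbol{b}+\sum_{i=1}^N t_iB_i\mathcal{R}_i^{-1}\boldsymbol{a}_i\Big).$$ Then the recursive least squares update is a discretization of this Riccati system: writing $P_i=P(T_i)$ and $q_i=q(T_i)$, for every $i=1,\dots,N$, $$P_i = P_{i-1} - t_iP_{i-1}B_i\big(\mathcal{R}_i + t_iB_i^TP_{i-1}B_i\big)^{-1}B_i^TP_{i-1},$$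 $$q_i = q_{i-1} + t_iP_iB_i\mathcal{R}_i^{-1}\boldsymbol{a}_i - t_iP_{i-1}B_i\big(\mathcal{R}_i + t_iB_i^TP_{i-1}B_i\big)^{-1}B_i^Tq_{i-1}.$$
   Context: The Riccati system arises from a regularized least-squares learning problem with $N$ data terms (weights $t_i$); $P(T_N)$ and $q(T_N)$ determine the learned minimizer, and the displayed recursion (obtained via the Woodbury identity) is the recursive least squares update for adding the $i$-th data term. *)

theory Defs
  imports "HOL-Analysis.Analysis"
begin

definition sym_posdef :: "real^'n^'n \<Rightarrow> bool" where
  "sym_posdef A \<longleftrightarrow> transpose A = A \<and> (\<forall>x. x \<noteq> 0 \<longrightarrow> x \<bullet> (A *v x) > 0)"

definition cumT :: "(nat \<Rightarrow> real) \<Rightarrow> nat \<Rightarrow> real" where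
  "cumT t i = (\<Sum>j=1..i. t j)"

end

theory Submission
  imports Defs
begin

text \<open>
  On an interval \<open>[T, T']\<close> of the Riccati system put \<open>K = B R\<^sup>-\<^sup>1 B\<^sup>T\<close> and let
  \<open>H\<close> be the inverse of \<open>P(T)\<close>. Then \<open>W(s) = I - P(s) (H + (s - T) K)\<close> solves the
  linear equation \<open>W' = -P K W\<close> with \<open>W(T) = 0\<close>, so it vanishes by a Gronwall
  argument: the inverse of \<open>P\<close> grows linearly, \<open>P(T')\<^sup>-\<^sup>1 = P(T)\<^sup>-\<^sup>1 + (T' - T) K\<close>.
  Likewise \<open>P\<^sup>-\<^sup>1 q\<close> has the constant derivative \<open>B R\<^sup>-\<^sup>1 a\<close>. The Woodbury identity
  turns these two facts into the recursive least squares update; the invertibility of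
  \<open>R + t B\<^sup>T P(T) B\<close> it needs follows from that of \<open>P(T')\<^sup>-\<^sup>1\<close>.
\<close>

lemma bounded_bilinear_matrix_matrix_mult:
  "bounded_bilinear ((**) :: real^'n^'m \<Rightarrow> real^'p^'n \<Rightarrow> real^'p^'m)"
proof -
  have "bilinear ((**) :: real^'n^'m \<Rightarrow> real^'p^'n \<Rightarrow> real^'p^'m)"
    by (auto intro!: linearI
        simp: bilinear_def matrix_add_ldistrib matrix_scalar_ac scalar_matrix_assoc,
        vector matrix_matrix_mult_def sum.distrib field_simps)
  then show ?thesis
    by (simp add: bilinear_conv_bounded_bilinear)
qed

lemma bounded_bilinear_matrix_vector_mult:
  "bounded_bilinear ((*v) :: real^'n^'m \<Rightarrow> real^'n \<Rightarrow> real^'m)"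
proof -
  have "bilinear ((*v) :: real^'n^'m \<Rightarrow> real^'n \<Rightarrow> real^'m)"
    by (auto intro!: linearI simp: bilinear_def algebra_simps scaleR_matrix_vector_assoc)
  then show ?thesis
    by (simp add: bilinear_conv_bounded_bilinear)
qed

lemmas matrix_add_rdistrib = bounded_bilinear.add_left[OF bounded_bilinear_matrix_matrix_mult]
lemmas matrix_diff_ldistrib = bounded_bilinear.diff_right[OF bounded_bilinear_matrix_matrix_mult]
lemmas matrix_diff_rdistrib = bounded_bilinear.diff_left[OF bounded_bilinear_matrix_matrix_mult]
lemmas matrix_minus_left = bounded_bilinear.minus_left[OF bounded_bilinear_matrix_matrix_mult]

lemma matrix_inv_unique:
  fixes A B :: "'a::field^'n^'n"
  assumes "A ** B = mat 1"
  shows "matrix_inv A = B"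
proof -
  have BA: "B ** A = mat 1"
    using assms matrix_left_right_inverse by blast
  have "A ** matrix_inv A = mat 1 \<and> matrix_inv A ** A = mat 1"
    unfolding matrix_inv_def by (rule someI[of _ B]) (simp add: assms BA)
  then have "matrix_inv A = matrix_inv A ** (A ** B)"
    using assms by simp
  also have "\<dots> = B"
    using \<open>_ \<and> _\<close> by (simp add: matrix_mul_assoc)
  finally show ?thesis .
qed

lemma matrix_inv_right:
  fixes A :: "'a::field^'n^'n"
  assumes "invertible A"
  shows "A ** matrix_inv A = mat 1"
  using assms matrix_inv_unique invertible_right_inverse by metis

lemma matrix_inv_left:
  fixes A :: "'a::field^'n^'n"
  assumes "invertible A"
  shows "matrix_inv A ** A = mat 1"
  using matrix_inv_right[OF assms] matrix_left_right_inverse by blast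

lemma invertible_if_kernel_trivial:
  fixes A :: "'a::field^'n^'n"
  assumes "\<And>x. A *v x = 0 \<Longrightarrow> x = 0"
  shows "invertible A"
  using assms matrix_left_invertible_ker invertible_left_inverse by blast

lemma sym_posdef_imp_invertible: "sym_posdef A \<Longrightarrow> invertible A"
  by (rule invertible_if_kernel_trivial) (force simp: sym_posdef_def)

lemma woodbury_inverse:
  fixes H A :: "real^'n^'n" and U :: "real^'m^'n" and V :: "real^'n^'m" and R :: "real^'m^'m"
  defines "M \<equiv> H + U ** matrix_inv R ** V" and "S \<equiv> R + V ** A ** U"
  assumes HA: "H ** A = mat 1" and "invertible R" and "invertible M"
  shows "invertible S" and "matrix_inv M = A - A ** U ** matrix_inv S ** V ** A"
proof -
  have R_inv: "matrix_inv R ** R = mat 1" "R ** matrix_inv R = mat 1"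
    using \<open>invertible R\<close> by (simp_all add: matrix_inv_left matrix_inv_right)
  show "invertible S"
  proof (rule invertible_if_kernel_trivial)
    \<comment> \<open>\<open>S x = 0\<close> puts \<open>A U x\<close> into the kernel of \<open>M\<close>, hence \<open>V A U x = 0\<close> and \<open>R x = 0\<close>.\<close>
    fix x assume "S *v x = 0"
    then have Rx: "R *v x = - ((V ** A ** U) *v x)"
      by (simp add: S_def algebra_simps eq_neg_iff_add_eq_0)
    have "M ** A ** U = U + U ** matrix_inv R ** (V ** A ** U)"
      by (simp add: M_def matrix_add_rdistrib matrix_mul_assoc HA)
    then have "M *v (A *v (U *v x)) = U *v x + (U ** matrix_inv R) *v ((V ** A ** U) *v x)"
      by (simp add: matrix_vector_mul_assoc matrix_mul_assoc algebra_simps)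
    also have "\<dots> = U *v x - (U ** matrix_inv R) *v (R *v x)"
      by (simp add: Rx bounded_bilinear.minus_right[OF bounded_bilinear_matrix_vector_mult])
    also have "\<dots> = U *v x - (U ** matrix_inv R ** R) *v x"
      by (simp only: matrix_vector_mul_assoc)
    also have "\<dots> = 0"
      by (simp add: R_inv flip: matrix_mul_assoc)
    finally have "A *v (U *v x) = 0"
      using \<open>invertible M\<close> matrix_left_invertible_ker invertible_left_inverse by metis
    then have "R *v x = 0"
      using Rx by (metis matrix_vector_mul_assoc neg_equal_0_iff_equal matrix_vector_mult_0_right)
    then show "x = 0"
      using R_inv by (metis matrix_vector_mul_assoc matrix_vector_mul_lid matrix_vector_mult_0_right)
  qed
  then have S_inv: "S ** matrix_inv S = mat 1"
    by (rule matrix_inv_right)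
  have "M ** (A - A ** U ** matrix_inv S ** V ** A) = mat 1"
  proof -
    have "U ** matrix_inv R ** V ** A ** U ** matrix_inv S = U ** matrix_inv R ** (S - R) ** matrix_inv S"
      by (simp add: S_def matrix_mul_assoc)
    also have "\<dots> = U ** matrix_inv R ** (S ** matrix_inv S) - U ** (matrix_inv R ** R) ** matrix_inv S"
      by (simp add: matrix_diff_ldistrib matrix_diff_rdistrib matrix_mul_assoc)
    also have "\<dots> = U ** matrix_inv R - U ** matrix_inv S"
      by (simp add: S_inv R_inv)
    finally have key: "U ** matrix_inv R ** V ** A ** U ** matrix_inv S = U ** matrix_inv R - U ** matrix_inv S" .
    show ?thesis
      unfolding M_def
      by (simp add: matrix_add_rdistrib matrix_diff_ldistrib matrix_diff_rdistrib matrix_mul_assoc HA key)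
  qed
  then show "matrix_inv M = A - A ** U ** matrix_inv S ** V ** A"
    by (rule matrix_inv_unique)
qed

lemma gronwall_vanishing:
  fixes w w' :: "real \<Rightarrow> 'a::real_inner"
  assumes "a \<le> b" and w_cont: "continuous_on {a..b} w" and "w a = 0"
    and w_deriv: "\<And>s. s \<in> {a<..<b} \<Longrightarrow> (w has_vector_derivative w' s) (at s)"
    and w'_bound: "\<And>s. s \<in> {a<..<b} \<Longrightarrow> norm (w' s) \<le> C * norm (w s)"
  shows "w b = 0"
proof -
  define g where "g s = exp (- 2 * C * s) * (w s \<bullet> w s)" for s
  have "g b \<le> g a"
  proof (rule DERIV_nonpos_imp_decreasing_open[OF \<open>a \<le> b\<close>])
    fix s assume "a < s" "s < b"
    then have s: "s \<in> {a<..<b}" by simp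
    have "((\<lambda>s. w s \<bullet> w s) has_real_derivative 2 * (w s \<bullet> w' s)) (at s)"
      using bounded_bilinear.has_vector_derivative[OF bounded_bilinear_inner w_deriv[OF s] w_deriv[OF s]]
      by (simp add: has_real_derivative_iff_has_vector_derivative inner_commute)
    then have "(g has_real_derivative exp (- 2 * C * s) * (2 * (w s \<bullet> w' s) - 2 * C * (w s \<bullet> w s))) (at s)"
      unfolding g_def by (auto intro!: derivative_eq_intros simp: algebra_simps)
    moreover have "w s \<bullet> w' s \<le> C * (w s \<bullet> w s)"
    proof -
      have "w s \<bullet> w' s \<le> norm (w s) * norm (w' s)"
        by (rule norm_cauchy_schwarz)
      also have "\<dots> \<le> norm (w s) * (C * norm (w s))"
        by (rule mult_left_mono[OF w'_bound[OF s]]) simp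
      finally show ?thesis
        by (simp add: dot_square_norm power2_eq_square mult_ac)
    qed
    ultimately show "\<exists>y. (g has_real_derivative y) (at s) \<and> y \<le> 0"
      by (auto intro!: mult_nonneg_nonpos)
  next
    show "continuous_on {a..b} g"
      unfolding g_def by (intro continuous_intros w_cont)
  qed
  moreover have "g a = 0"
    using \<open>w a = 0\<close> by (simp add: g_def)
  ultimately have "w b \<bullet> w b \<le> 0"
    by (simp add: g_def mult_le_0_iff)
  then show "w b = 0"
    by (simp add: order_antisym_conv)
qed

lemma riccati_inverse_flow:
  fixes P :: "real \<Rightarrow> real^'n^'n" and H K :: "real^'n^'n"
  assumes "a \<le> b" and P_cont: "continuous_on {a..b} P"
    and P_deriv: "\<And>s. s \<in> {a<..<b} \<Longrightarrow> (P has_vector_derivative - (P s ** K ** P s)) (at s)"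
    and "P a ** H = mat 1"
  shows "P b ** (H + (b - a) *\<^sub>R K) = mat 1"
proof -
  define X where "X s = H + (s - a) *\<^sub>R K" for s
  define W where "W s = mat 1 - P s ** X s" for s
  have "bounded ((\<lambda>s. P s ** K) ` {a..b})"
    by (intro compact_imp_bounded compact_continuous_image compact_Icc
        bounded_bilinear.continuous_on[OF bounded_bilinear_matrix_matrix_mult] P_cont continuous_intros)
  then obtain C where C_bound: "\<forall>Y \<in> (\<lambda>s. P s ** K) ` {a..b}. norm Y \<le> C"
    unfolding bounded_iff ..
  have C: "norm (P s ** K) \<le> C" if "s \<in> {a..b}" for s
    using bspec[OF C_bound imageI[OF that]] .
  obtain L where L: "\<And>x y. norm ((x::real^'n^'n) ** (y::real^'n^'n)) \<le> norm x * norm y * L" "L > 0"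
    using bounded_bilinear.pos_bounded[OF bounded_bilinear_matrix_matrix_mult] by blast
  have "W b = 0"
  proof (rule gronwall_vanishing[where C = "C * L"])
    show "continuous_on {a..b} W"
      unfolding W_def X_def
      by (intro continuous_intros bounded_bilinear.continuous_on[OF bounded_bilinear_matrix_matrix_mult] P_cont)
    show "W a = 0"
      using \<open>P a ** H = mat 1\<close> by (simp add: W_def X_def)
    fix s assume s: "s \<in> {a<..<b}"
    have "((\<lambda>s. P s ** X s) has_vector_derivative P s ** K + - (P s ** K ** P s) ** X s) (at s)"
      unfolding X_def
      by (intro bounded_bilinear.has_vector_derivative[OF bounded_bilinear_matrix_matrix_mult] P_deriv[OF s])
        (auto intro!: derivative_eq_intros)
    then have "(W has_vector_derivative 0 - (P s ** K + - (P s ** K ** P s) ** X s)) (at s)"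
      unfolding W_def by (intro derivative_intros)
    moreover have "0 - (P s ** K + - (P s ** K ** P s) ** X s) = - (P s ** K) ** W s"
      by (simp add: W_def matrix_diff_ldistrib matrix_minus_left matrix_mul_assoc)
    ultimately show "(W has_vector_derivative - (P s ** K) ** W s) (at s)"
      by simp
    have "norm (- (P s ** K) ** W s) \<le> norm (P s ** K) * norm (W s) * L"
      using L(1)[of "- (P s ** K)" "W s"] by simp
    also have "\<dots> \<le> C * norm (W s) * L"
      using C[of s] s L(2) by (intro mult_right_mono) auto
    finally show "norm (- (P s ** K) ** W s) \<le> C * L * norm (W s)"
      by (simp add: mult_ac)
  qed (use \<open>a \<le> b\<close> in simp)
  then show ?thesis
    by (simp add: W_def X_def)
qed

lemma riccati_affine_flow:
  fixes P :: "real \<Rightarrow> real^'n^'n" and q :: "real \<Rightarrow> real^'n" and H K :: "real^'n^'n"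
  assumes "a \<le> b" and q_cont: "continuous_on {a..b} q"
    and P_inv: "\<And>s. s \<in> {a..b} \<Longrightarrow> P s ** (H + (s - a) *\<^sub>R K) = mat 1"
    and q_deriv: "\<And>s. s \<in> {a<..<b} \<Longrightarrow> (q has_vector_derivative P s *v (c - K *v q s)) (at s)"
  shows "(H + (b - a) *\<^sub>R K) *v q b = H *v q a + (b - a) *\<^sub>R c"
proof -
  define X where "X s = H + (s - a) *\<^sub>R K" for s
  define y where "y s = X s *v q s - (s - a) *\<^sub>R c" for s
  have "y b = y a"
  proof (rule has_derivative_zero_unique_strong_interval[of "{a, b}"])
    show "continuous_on {a..b} y"
      unfolding y_def X_def
      by (intro continuous_intros q_cont
          bounded_bilinear.continuous_on[OF bounded_bilinear_matrix_vector_mult])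
    fix s assume "s \<in> {a..b} - {a, b}"
    then have s: "s \<in> {a<..<b}" by auto
    have "X s ** P s = mat 1"
      using P_inv[of s] s matrix_left_right_inverse by (auto simp: X_def)
    then have "X s *v (P s *v (c - K *v q s)) + K *v q s = c"
      by (simp add: matrix_vector_mul_assoc matrix_mul_assoc algebra_simps)
    moreover have "((\<lambda>s. X s *v q s) has_vector_derivative
        X s *v (P s *v (c - K *v q s)) + K *v q s) (at s)"
      unfolding X_def
      by (intro bounded_bilinear.has_vector_derivative[OF bounded_bilinear_matrix_vector_mult] q_deriv[OF s])
        (auto intro!: derivative_eq_intros)
    ultimately have "(y has_vector_derivative c - c) (at s)"
      unfolding y_def by (auto intro!: derivative_eq_intros)
    then show "(y has_derivative (\<lambda>h. 0)) (at s within {a..b})"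
      by (simp add: has_vector_derivative_def has_derivative_at_withinI)
  qed (use \<open>a \<le> b\<close> in auto)
  then show ?thesis
    by (simp add: y_def X_def diff_eq_eq)
qed

locale riccati_interval =
  fixes a b :: real
    and P :: "real \<Rightarrow> real^'n^'n" and q :: "real \<Rightarrow> real^'n"
    and B :: "real^'m^'n" and R :: "real^'m^'m" and \<alpha> :: "real^'m"
    and H :: "real^'n^'n"
  assumes a_le_b: "a \<le> b"
    and R_invertible: "invertible R"
    and P_cont: "continuous_on {a..b} P"
    and q_cont: "continuous_on {a..b} q"
    and P_ode: "\<And>s. s \<in> {a..<b} \<Longrightarrow>
      (P has_vector_derivative - (P s ** B ** matrix_inv R ** transpose B ** P s)) (at s within {a..<b})"
    and q_ode: "\<And>s. s \<in> {a..<b} \<Longrightarrow>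
      (q has_vector_derivative - ((P s ** B ** matrix_inv R) *v (transpose B *v q s - \<alpha>)))
        (at s within {a..<b})"
    and P_start: "P a ** H = mat 1"
begin

abbreviation info_rate :: "real^'n^'n" where
  "info_rate \<equiv> B ** matrix_inv R ** transpose B"

lemma at_within_interval: "s \<in> {a<..<b} \<Longrightarrow> at s within {a..<b} = at s"
  by (rule at_within_interior) simp

lemma P_inverse:
  assumes "s \<in> {a..b}"
  shows "P s ** (H + (s - a) *\<^sub>R info_rate) = mat 1"
proof (rule riccati_inverse_flow)
  show "a \<le> s"
    using assms by simp
  show "continuous_on {a..s} P"
    using assms by (auto intro: continuous_on_subset[OF P_cont])
  show "P a ** H = mat 1"
    by (rule P_start)
  fix u assume "u \<in> {a<..<s}"
  then have "u \<in> {a<..<b}"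
    using assms by simp
  then show "(P has_vector_derivative - (P u ** info_rate ** P u)) (at u)"
    using P_ode[of u] by (simp add: at_within_interval matrix_mul_assoc)
qed

lemma P_end: "P b ** (H + (b - a) *\<^sub>R info_rate) = mat 1"
  using P_inverse a_le_b by simp

lemma P_update:
  "P b = P a - (b - a) *\<^sub>R
     (P a ** B ** matrix_inv (R + (b - a) *\<^sub>R (transpose B ** P a ** B)) ** transpose B ** P a)"
proof -
  have "H ** P a = mat 1"
    using P_start matrix_left_right_inverse by blast
  moreover have P_b: "(H + (b - a) *\<^sub>R info_rate) ** P b = mat 1"
    using P_end matrix_left_right_inverse by blast
  then have "invertible (H + ((b - a) *\<^sub>R B) ** matrix_inv R ** transpose B)"
    by (auto simp: invertible_right_inverse scalar_matrix_assoc)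
  ultimately have "matrix_inv (H + ((b - a) *\<^sub>R B) ** matrix_inv R ** transpose B) =
    P a - P a ** ((b - a) *\<^sub>R B) ** matrix_inv (R + transpose B ** P a ** ((b - a) *\<^sub>R B))
      ** transpose B ** P a"
    using woodbury_inverse R_invertible by blast
  moreover have "matrix_inv (H + ((b - a) *\<^sub>R B) ** matrix_inv R ** transpose B) = P b"
    using P_b by (auto intro: matrix_inv_unique simp: scalar_matrix_assoc)
  ultimately show ?thesis
    by (simp add: matrix_scalar_ac scalar_matrix_assoc)
qed

lemma q_update:
  "q b = q a + (b - a) *\<^sub>R ((P b ** B ** matrix_inv R) *v \<alpha>)
     - (b - a) *\<^sub>R ((P a ** B ** matrix_inv (R + (b - a) *\<^sub>R (transpose B ** P a ** B))
         ** transpose B) *v q a)"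
proof -
  define c where "c = (B ** matrix_inv R) *v \<alpha>"
  define G where "G = P a ** B ** matrix_inv (R + (b - a) *\<^sub>R (transpose B ** P a ** B)) ** transpose B"
  have flow: "(H + (b - a) *\<^sub>R info_rate) *v q b = H *v q a + (b - a) *\<^sub>R c"
  proof (rule riccati_affine_flow[OF a_le_b q_cont P_inverse])
    fix s assume s: "s \<in> {a<..<b}"
    have "- ((P s ** B ** matrix_inv R) *v (transpose B *v q s - \<alpha>)) =
        (P s ** B ** matrix_inv R) *v \<alpha> - (P s ** info_rate) *v q s"
      by (simp only: matrix_vector_mult_diff_distrib minus_diff_eq matrix_vector_mul_assoc matrix_mul_assoc)
    also have "\<dots> = P s *v (c - info_rate *v q s)"
      by (simp only: c_def matrix_vector_mult_diff_distrib matrix_vector_mul_assoc matrix_mul_assoc)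
    finally have "- ((P s ** B ** matrix_inv R) *v (transpose B *v q s - \<alpha>)) = P s *v (c - info_rate *v q s)" .
    then show "(q has_vector_derivative P s *v (c - info_rate *v q s)) (at s)"
      using q_ode[of s] s by (simp add: at_within_interval)
  qed
  have "q b = P b *v ((H + (b - a) *\<^sub>R info_rate) *v q b)"
    using P_end by (simp add: matrix_vector_mul_assoc)
  also have "\<dots> = P b *v (H *v q a) + (b - a) *\<^sub>R (P b *v c)"
    by (simp only: flow matrix_vector_right_distrib matrix_vector_mult_scaleR)
  finally have "q b = P b *v (H *v q a) + (b - a) *\<^sub>R (P b *v c)" .
  moreover have "P b ** H = mat 1 - (b - a) *\<^sub>R G"
  proof -
    have "P b = P a - (b - a) *\<^sub>R (G ** P a)"
      unfolding G_def by (rule P_update)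
    then show ?thesis
      by (simp add: matrix_diff_rdistrib P_start
          flip: scalar_matrix_assoc matrix_mul_assoc)
  qed
  then have "P b *v (H *v q a) = q a - (b - a) *\<^sub>R (G *v q a)"
    by (simp add: matrix_vector_mul_assoc matrix_vector_mult_diff_rdistrib
        flip: scaleR_matrix_vector_assoc)
  moreover have "P b *v c = (P b ** B ** matrix_inv R) *v \<alpha>"
    by (simp add: c_def matrix_vector_mul_assoc matrix_mul_assoc)
  ultimately show ?thesis
    unfolding G_def by (simp add: algebra_simps)
qed

end

lemma cumT_0 [simp]: "cumT t 0 = 0"
  by (simp add: cumT_def)

lemma cumT_Suc: "cumT t (Suc j) = cumT t j + t (Suc j)"
  by (simp add: cumT_def)

lemma cumT_mono:
  assumes "j \<le> k" and "\<And>i. i \<in> {j<..k} \<Longrightarrow> 0 \<le> t i"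
  shows "cumT t j \<le> cumT t k"
  unfolding cumT_def by (rule sum_mono2) (use assms in auto)

lemma riccati_interval_piece:
  fixes t :: "nat \<Rightarrow> real" and R :: "nat \<Rightarrow> real^'m^'m" and B :: "nat \<Rightarrow> real^'m^'n"
    and a :: "nat \<Rightarrow> real^'m" and P :: "real \<Rightarrow> real^'n^'n" and q :: "real \<Rightarrow> real^'n"
  assumes j: "Suc j \<le> N"
    and t_pos: "\<And>i. i \<in> {1..N} \<Longrightarrow> t i > 0"
    and R_spd: "\<And>i. i \<in> {1..N} \<Longrightarrow> sym_posdef (R i)"
    and P_cont: "continuous_on {0..cumT t N} P"
    and q_cont: "continuous_on {0..cumT t N} q"
    and P_ode: "\<And>i s. i \<in> {1..N} \<Longrightarrow> s \<in> {cumT t (i-1)..<cumT t i} \<Longrightarrow>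
       (P has_vector_derivative
          (- (P s ** B i ** matrix_inv (R i) ** transpose (B i) ** P s)))
       (at s within {cumT t (i-1)..<cumT t i})"
    and q_ode: "\<And>i s. i \<in> {1..N} \<Longrightarrow> s \<in> {cumT t (i-1)..<cumT t i} \<Longrightarrow>
       (q has_vector_derivative
          (- ((P s ** B i ** matrix_inv (R i)) *v (transpose (B i) *v q s - a i))))
       (at s within {cumT t (i-1)..<cumT t i})"
    and start: "P (cumT t j) ** H = mat 1"
  shows "riccati_interval (cumT t j) (cumT t (Suc j)) P q (B (Suc j)) (R (Suc j)) (a (Suc j)) H"
proof unfold_locales
  show "cumT t j \<le> cumT t (Suc j)"
    using t_pos[of "Suc j"] j by (simp add: cumT_Suc)
  show "invertible (R (Suc j))"
    using R_spd[of "Suc j"] j by (simp add: sym_posdef_imp_invertible)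
  have "{cumT t j..cumT t (Suc j)} \<subseteq> {0..cumT t N}"
    using j t_pos cumT_mono[of 0 j t] cumT_mono[of "Suc j" N t] by (force intro: less_imp_le)
  then show "continuous_on {cumT t j..cumT t (Suc j)} P" "continuous_on {cumT t j..cumT t (Suc j)} q"
    using continuous_on_subset P_cont q_cont by blast+
qed (use j P_ode[of "Suc j"] q_ode[of "Suc j"] start in simp_all)

theorem mainTheorem1:
  fixes N :: nat
    and Qf :: "real^'n^'n" and b :: "real^'n"
    and t :: "nat \<Rightarrow> real"
    and R :: "nat \<Rightarrow> real^'m^'m"
    and B :: "nat \<Rightarrow> real^'m^'n"
    and a :: "nat \<Rightarrow> real^'m"
    and P :: "real \<Rightarrow> real^'n^'n"
    and q :: "real \<Rightarrow> real^'n"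
  assumes N_pos: "N \<ge> 1"
    and Qf_spd: "sym_posdef Qf"
    and t_pos: "\<And>i. i \<in> {1..N} \<Longrightarrow> t i > 0"
    and R_spd: "\<And>i. i \<in> {1..N} \<Longrightarrow> sym_posdef (R i)"
    and P_cont: "continuous_on {0..cumT t N} P"
    and q_cont: "continuous_on {0..cumT t N} q"
    and P_ode: "\<And>i s. i \<in> {1..N} \<Longrightarrow> s \<in> {cumT t (i-1)..<cumT t i} \<Longrightarrow>
       (P has_vector_derivative
          (- (P s ** B i ** matrix_inv (R i) ** transpose (B i) ** P s)))
       (at s within {cumT t (i-1)..<cumT t i})"
    and q_ode: "\<And>i s. i \<in> {1..N} \<Longrightarrow> s \<in> {cumT t (i-1)..<cumT t i} \<Longrightarrow>
       (q has_vector_derivative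
          (- ((P s ** B i ** matrix_inv (R i)) *v (transpose (B i) *v q s - a i))))
       (at s within {cumT t (i-1)..<cumT t i})"
    and P_init: "P 0 = Qf"
    and q_init: "q 0 = b"
    and P_final: "P (cumT t N) =
       matrix_inv (matrix_inv Qf + (\<Sum>i=1..N. t i *\<^sub>R (B i ** matrix_inv (R i) ** transpose (B i))))"
    and q_final: "q (cumT t N) =
       P (cumT t N) *v (matrix_inv Qf *v b + (\<Sum>i=1..N. t i *\<^sub>R ((B i ** matrix_inv (R i)) *v a i)))"
  shows "\<forall>i\<in>{1..N}.
     P (cumT t i) = P (cumT t (i-1))
        - t i *\<^sub>R (P (cumT t (i-1)) ** B i
            ** matrix_inv (R i + t i *\<^sub>R (transpose (B i) ** P (cumT t (i-1)) ** B i))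
            ** transpose (B i) ** P (cumT t (i-1)))
   \<and> q (cumT t i) = q (cumT t (i-1))
        + t i *\<^sub>R ((P (cumT t i) ** B i ** matrix_inv (R i)) *v a i)
        - t i *\<^sub>R ((P (cumT t (i-1)) ** B i
            ** matrix_inv (R i + t i *\<^sub>R (transpose (B i) ** P (cumT t (i-1)) ** B i))
            ** transpose (B i)) *v q (cumT t (i-1)))"
proof -
  define H where
    "H j = matrix_inv Qf + (\<Sum>k=1..j. t k *\<^sub>R (B k ** matrix_inv (R k) ** transpose (B k)))" for j
  have H_Suc: "H (Suc j) = H j + t (Suc j) *\<^sub>R (B (Suc j) ** matrix_inv (R (Suc j)) ** transpose (B (Suc j)))"
    for j by (simp add: H_def add.assoc)
  have interval: "riccati_interval (cumT t j) (cumT t (Suc j)) P q (B (Suc j)) (R (Suc j)) (a (Suc j)) (H j)"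
    if "Suc j \<le> N" and "P (cumT t j) ** H j = mat 1" for j
    by (rule riccati_interval_piece[OF that(1) t_pos R_spd P_cont q_cont P_ode q_ode that(2)])
  have P_H: "P (cumT t j) ** H j = mat 1" if "j \<le> N" for j
    using that
  proof (induction j)
    case 0
    show ?case
      using Qf_spd by (simp add: H_def P_init matrix_inv_right sym_posdef_imp_invertible)
  next
    case (Suc j)
    then show ?case
      using riccati_interval.P_end[OF interval] by (simp add: H_Suc cumT_Suc)
  qed
  show ?thesis (is "\<forall>i\<in>{1..N}. ?update i")
  proof
    fix i assume "i \<in> {1..N}"
    then obtain j where "i = Suc j" and j: "Suc j \<le> N"
      by (cases i) auto
    moreover note interval_j = interval[OF j P_H[OF Suc_leD[OF j]]]
    ultimately show "?update i"
      using riccati_interval.P_update[OF interval_j] riccati_interval.q_update[OF interval_j]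
      by (simp add: cumT_Suc)
  qed
qed

end
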